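(* Let $\mathcal M=(M,<,+,0,\ldots)$ be a definably complete locally o-minimal expansion of an ordered group. Let $(G,\tau_G)$ be a definable topological group and $H$ a definable normal subgroup of $G$, with $\tau_H$ the relative topology on $H$. If both the definable topological space $(H,\tau_H)$ and the definable quotient group $(G/H,\tau_Q)$ are definably compact, then $(G,\tau_G)$ is definably compact.
   Context: "Definable" means definable in $\mathcal M$ with parameters. $\mathcal M$ is an expansion of an ordered group with dense order without endpoints; locally o-minimal: for every definable $X\subseteq M$ and $a\in M$ there is an open interval $I\ni a$ with $X\cap I$ a finite union of points and open intervals; definably complete: every definable subset of $M$ has sup and inf in $M\cup\{\pm\infty\}$. A family $\{S_t:t\in T\}$ is definable if $\bigcup_t \{t\}\times S_t$ and $T$ are definable. A definable topological space is a definable set with a topology having a definable family as open base; it is definably compact if every definable filtered family (for any two members there is a member contained in their intersection) of nonempty closed subsets has nonempty intersection. A definable topological group is a definable group with a definable topology making multiplication and inversion continuous. For a definable continuous action of $H$ on $G$ (here by left multiplication), the definable quotient is a definable topological space $(Q,\tau_Q)$ with a definable continuous map $\pi:G\to Q$ such that every definable continuous map $\varphi$ from $G$ to a definable topological space which is constant on $H$-orbits factors uniquely as $\varphi=\psi\circ\pi$ with $\psi$ definable continuous; it exists and is unique up to definable homeomorphism (concretely: $Q$ a definable set meeting each coset $Hg$ in exactly one point, $\pi$ sending $g$ to that point, and $S\subseteq Q$ open iff $\pi^{-1}(S)$ open). When $H$ is normal, $Q=G/H$ is a definable topological group with multiplication $g_1H\cdot g_2H=g_1g_2H$, called the definable quotient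 group. *)

theory Defs
  imports "HOL-Analysis.Analysis" "HOL-Algebra.Coset"
begin

text \<open>Points of M^n are lists of length n. A structure is given by D, where D n is the
collection of definable (with parameters) subsets of M^n.\<close>

definition Mn :: "nat \<Rightarrow> 'a list set" where
  "Mn n = {xs. length xs = n}"

definition structure_on :: "(nat \<Rightarrow> 'a list set set) \<Rightarrow> bool" where
  "structure_on D \<longleftrightarrow>
     (\<forall>n S. S \<in> D n \<longrightarrow> S \<subseteq> Mn n) \<and>
     (\<forall>n. Mn n \<in> D n) \<and>
     (\<forall>n S T. S \<in> D n \<and> T \<in> D n \<longrightarrow> S \<union> T \<in> D n) \<and>
     (\<forall>n S. S \<in> D n \<longrightarrow> Mn n - S \<in> D n) \<and>
     (\<forall>n m S T. S \<in> D n \<and> T \<in> D m \<longrightarrow> {xs @ ys | xs ys. xs \<in> S \<and> ys \<in> T} \<in> D (n + m)) \<and>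
     (\<forall>n i j. i < n \<and> j < n \<longrightarrow> {xs \<in> Mn n. xs ! i = xs ! j} \<in> D n) \<and>
     (\<forall>n S. S \<in> D (Suc n) \<longrightarrow> take n ` S \<in> D n)"

text \<open>D is an expansion of the ordered group (M,<,+,0), with all parameters allowed.\<close>
definition expands_ordered_group :: "(nat \<Rightarrow> ('a::linordered_ab_group_add) list set set) \<Rightarrow> bool" where
  "expands_ordered_group D \<longleftrightarrow>
     structure_on D \<and>
     (\<forall>a. {[a]} \<in> D 1) \<and>
     {[x, y] | x y. x < y} \<in> D 2 \<and>
     {[x, y, z] | x y z. x + y = z} \<in> D 3"

definition set1 :: "'a list set \<Rightarrow> 'a set" where
  "set1 X = {x. [x] \<in> X}"

definition finite_union_points_intervals :: "('a::linorder) set \<Rightarrow> bool" where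
  "finite_union_points_intervals A \<longleftrightarrow>
     (\<exists>P J. finite P \<and> finite J \<and> A = P \<union> (\<Union>(c, d)\<in>J. {c<..<d}))"

definition locally_o_minimal :: "(nat \<Rightarrow> ('a::linorder) list set set) \<Rightarrow> bool" where
  "locally_o_minimal D \<longleftrightarrow>
     (\<forall>X a. X \<in> D 1 \<longrightarrow>
        (\<exists>l u. l < a \<and> a < u \<and> finite_union_points_intervals (set1 X \<inter> {l<..<u})))"

definition definably_complete :: "(nat \<Rightarrow> ('a::linorder) list set set) \<Rightarrow> bool" where
  "definably_complete D \<longleftrightarrow>
     (\<forall>X. X \<in> D 1 \<longrightarrow>
        ((set1 X \<noteq> {} \<and> (\<exists>b. \<forall>x\<in>set1 X. x \<le> b)) \<longrightarrow>
            (\<exists>s. (\<forall>x\<in>set1 X. x \<le> s) \<and> (\<forall>b. (\<forall>x\<in>set1 X. x \<le> b) \<longrightarrow> s \<le> b))) \<and>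
        ((set1 X \<noteq> {} \<and> (\<exists>b. \<forall>x\<in>set1 X. b \<le> x)) \<longrightarrow>
            (\<exists>s. (\<forall>x\<in>set1 X. s \<le> x) \<and> (\<forall>b. (\<forall>x\<in>set1 X. b \<le> x) \<longrightarrow> b \<le> s))))"

definition dc_lomin_expansion :: "(nat \<Rightarrow> ('a::linordered_ab_group_add) list set set) \<Rightarrow> bool" where
  "dc_lomin_expansion D \<longleftrightarrow>
     expands_ordered_group D \<and>
     (\<forall>x y::'a. x < y \<longrightarrow> (\<exists>z. x < z \<and> z < y)) \<and>
     (\<forall>x::'a. (\<exists>y. y < x) \<and> (\<exists>y. x < y)) \<and>
     locally_o_minimal D \<and> definably_complete D"

definition def_family :: "(nat \<Rightarrow> 'a list set set) \<Rightarrow> nat \<Rightarrow> nat \<Rightarrow> 'a list set \<Rightarrow> ('a list \<Rightarrow> 'a list set) \<Rightarrow> bool" where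
  "def_family D m n T S \<longleftrightarrow>
     T \<in> D m \<and> (\<forall>t\<in>T. S t \<subseteq> Mn n) \<and> {t @ x | t x. t \<in> T \<and> x \<in> S t} \<in> D (m + n)"

definition def_map :: "(nat \<Rightarrow> 'a list set set) \<Rightarrow> nat \<Rightarrow> nat \<Rightarrow> 'a list set \<Rightarrow> ('a list \<Rightarrow> 'a list) \<Rightarrow> bool" where
  "def_map D n m X f \<longleftrightarrow> (\<forall>x\<in>X. f x \<in> Mn m) \<and> {x @ f x | x. x \<in> X} \<in> D (n + m)"

definition def_top_space :: "(nat \<Rightarrow> 'a list set set) \<Rightarrow> nat \<Rightarrow> 'a list topology \<Rightarrow> bool" where
  "def_top_space D n \<tau> \<longleftrightarrow>
     topspace \<tau> \<in> D n \<and>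
     (\<exists>m T B. def_family D m n T B \<and> (\<forall>t\<in>T. openin \<tau> (B t)) \<and>
        (\<forall>U. openin \<tau> U \<longrightarrow> (\<forall>x\<in>U. \<exists>t\<in>T. x \<in> B t \<and> B t \<subseteq> U)))"

definition def_cont_map :: "(nat \<Rightarrow> 'a list set set) \<Rightarrow> nat \<Rightarrow> nat \<Rightarrow> 'a list topology \<Rightarrow> 'a list topology \<Rightarrow> ('a list \<Rightarrow> 'a list) \<Rightarrow> bool" where
  "def_cont_map D n m \<tau>X \<tau>Y f \<longleftrightarrow> continuous_map \<tau>X \<tau>Y f \<and> def_map D n m (topspace \<tau>X) f"

definition def_compact :: "(nat \<Rightarrow> 'a list set set) \<Rightarrow> nat \<Rightarrow> 'a list topology \<Rightarrow> bool" where
  "def_compact D n \<tau> \<longleftrightarrow>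
     (\<forall>m T C. def_family D m n T C \<and> T \<noteq> {} \<and>
        (\<forall>t\<in>T. closedin \<tau> (C t) \<and> C t \<noteq> {}) \<and>
        (\<forall>s\<in>T. \<forall>t\<in>T. \<exists>u\<in>T. C u \<subseteq> C s \<inter> C t)
        \<longrightarrow> (\<Inter>t\<in>T. C t) \<noteq> {})"

definition def_top_group :: "(nat \<Rightarrow> 'a list set set) \<Rightarrow> nat \<Rightarrow> 'a list monoid \<Rightarrow> 'a list topology \<Rightarrow> bool" where
  "def_top_group D n G \<tau> \<longleftrightarrow>
     group G \<and> topspace \<tau> = carrier G \<and> def_top_space D n \<tau> \<and>
     {x @ y @ (x \<otimes>\<^bsub>G\<^esub> y) | x y. x \<in> carrier G \<and> y \<in> carrier G} \<in> D (n + n + n) \<and>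
     {x @ inv\<^bsub>G\<^esub> x | x. x \<in> carrier G} \<in> D (n + n) \<and>
     continuous_map (prod_topology \<tau> \<tau>) \<tau> (\<lambda>(x, y). x \<otimes>\<^bsub>G\<^esub> y) \<and>
     continuous_map \<tau> \<tau> (\<lambda>x. inv\<^bsub>G\<^esub> x)"

definition is_def_quotient :: "(nat \<Rightarrow> 'a list set set) \<Rightarrow> nat \<Rightarrow> 'a list monoid \<Rightarrow> 'a list topology \<Rightarrow> 'a list set
     \<Rightarrow> nat \<Rightarrow> 'a list topology \<Rightarrow> ('a list \<Rightarrow> 'a list) \<Rightarrow> bool" where
  "is_def_quotient D n G \<tau> H k \<tau>Q \<pi> \<longleftrightarrow>
     def_top_space D k \<tau>Q \<and> def_cont_map D n k \<tau> \<tau>Q \<pi> \<and>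
     (\<forall>g\<in>carrier G. \<forall>h\<in>H. \<pi> (h \<otimes>\<^bsub>G\<^esub> g) = \<pi> g) \<and>
     (\<forall>m \<tau>Y \<phi>. def_top_space D m \<tau>Y \<and> def_cont_map D n m \<tau> \<tau>Y \<phi> \<and>
         (\<forall>g\<in>carrier G. \<forall>h\<in>H. \<phi> (h \<otimes>\<^bsub>G\<^esub> g) = \<phi> g) \<longrightarrow>
        (\<exists>\<psi>. def_cont_map D k m \<tau>Q \<tau>Y \<psi> \<and> (\<forall>g\<in>carrier G. \<phi> g = \<psi> (\<pi> g))) \<and>
        (\<forall>\<psi>1 \<psi>2. def_cont_map D k m \<tau>Q \<tau>Y \<psi>1 \<and> (\<forall>g\<in>carrier G. \<phi> g = \<psi>1 (\<pi> g)) \<and>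
                  def_cont_map D k m \<tau>Q \<tau>Y \<psi>2 \<and> (\<forall>g\<in>carrier G. \<phi> g = \<psi>2 (\<pi> g)) \<longrightarrow>
                  (\<forall>q\<in>topspace \<tau>Q. \<psi>1 q = \<psi>2 q)))"

end

theory Submission
  imports Defs
begin

text \<open>Let \<open>C\<^sub>t\<close> be a filtered definable family of nonempty closed subsets of \<open>G\<close>. Since \<open>H\<close> is
definably compact, \<open>H C\<close> is closed for every definable closed \<open>C\<close>: if \<open>x\<close> lies in the closure
of \<open>H C\<close>, the closures in \<open>H\<close> of the sets \<open>{h \<in> H. h C meets U}\<close>, for \<open>U\<close> running through
the basic neighbourhoods of \<open>x\<close>, form a filtered definable family, and a common point \<open>h\<close> of
them satisfies \<open>h\<inverse> x \<in> C\<close> by continuity. The universal property of the definable quotient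
shows that \<open>\<pi>\<close> is a surjective quotient map whose fibres are the cosets \<open>H a\<close>; hence the
images \<open>\<pi>(C\<^sub>t)\<close> form a filtered definable family of closed sets in \<open>G/H\<close>, and its definable
compactness yields a common point \<open>\<pi>(a)\<close>. Then the sets \<open>{h \<in> H. h a \<in> C\<^sub>t}\<close> form a filtered
definable family of nonempty closed subsets of \<open>H\<close>, and for a common point \<open>h\<close> the element
\<open>h a\<close> lies in every \<open>C\<^sub>t\<close>.\<close>

section \<open>Indiscrete and quotient topologies\<close>

definition indiscrete_topology :: "'b set \<Rightarrow> 'b topology" where
  "indiscrete_topology S = topology (\<lambda>U. U = {} \<or> U = S)"

lemma openin_indiscrete_topology: "openin (indiscrete_topology S) U \<longleftrightarrow> U = {} \<or> U = S"
proof -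
  have "istopology (\<lambda>U. U = {} \<or> U = S)"
    unfolding istopology_def by auto
  then show ?thesis
    unfolding indiscrete_topology_def by simp
qed

lemma topspace_indiscrete_topology [simp]: "topspace (indiscrete_topology S) = S"
  unfolding topspace_def openin_indiscrete_topology by auto

lemma continuous_map_indiscrete_topology:
  assumes "f ` topspace X \<subseteq> S"
  shows "continuous_map X (indiscrete_topology S) f"
proof -
  have "{x \<in> topspace X. f x \<in> S} = topspace X"
    using assms by auto
  then show ?thesis
    using assms unfolding continuous_map_def openin_indiscrete_topology by auto
qed

definition quotient_topology :: "'a topology \<Rightarrow> ('a \<Rightarrow> 'b) \<Rightarrow> 'b set \<Rightarrow> 'b topology" where
  "quotient_topology X f S = topology (\<lambda>U. U \<subseteq> S \<and> openin X {x \<in> topspace X. f x \<in> U})"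

lemma openin_quotient_topology:
  "openin (quotient_topology X f S) U \<longleftrightarrow> U \<subseteq> S \<and> openin X {x \<in> topspace X. f x \<in> U}"
proof -
  have Int: "{x \<in> topspace X. f x \<in> U \<inter> V} = {x \<in> topspace X. f x \<in> U} \<inter> {x \<in> topspace X. f x \<in> V}"
    for U V
    by blast
  have Union: "{x \<in> topspace X. f x \<in> \<Union>\<U>} = (\<Union>U\<in>\<U>. {x \<in> topspace X. f x \<in> U})" for \<U>
    by blast
  have "istopology (\<lambda>U. U \<subseteq> S \<and> openin X {x \<in> topspace X. f x \<in> U})"
    unfolding istopology_def Int Union by (auto intro!: openin_Int openin_Union)
  then show ?thesis
    unfolding quotient_topology_def by simp
qed

lemma topspace_quotient_topology:
  assumes "f ` topspace X \<subseteq> S"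
  shows "topspace (quotient_topology X f S) = S"
proof -
  have "{x \<in> topspace X. f x \<in> S} = topspace X"
    using assms by auto
  then have "openin (quotient_topology X f S) S"
    by (simp add: openin_quotient_topology)
  then show ?thesis
    by (metis openin_quotient_topology openin_subset openin_topspace subset_antisym)
qed

lemma continuous_map_quotient_topology:
  assumes "f ` topspace X \<subseteq> S"
  shows "continuous_map X (quotient_topology X f S) f"
  using assms by (auto simp: continuous_map_def topspace_quotient_topology openin_quotient_topology)

section \<open>Definable relations, bases and compactness\<close>

lemma Mn_iff [simp]: "xs \<in> Mn n \<longleftrightarrow> length xs = n"
  by (simp add: Mn_def)

fun split_blocks :: "nat list \<Rightarrow> 'a list \<Rightarrow> 'a list list" where
  "split_blocks [] xs = []"
| "split_blocks (n # ns) xs = take n xs # split_blocks ns (drop n xs)"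

lemma map_length_split_blocks:
  "sum_list ns \<le> length xs \<Longrightarrow> map length (split_blocks ns xs) = ns"
  by (induction ns arbitrary: xs) auto

lemma split_blocks_append:
  "length xs = sum_list ns \<Longrightarrow> split_blocks (ns @ ms) (xs @ ys) = split_blocks ns xs @ split_blocks ms ys"
  by (induction ns arbitrary: xs) auto

lemma nth_split_blocks:
  "i < length ns \<Longrightarrow> split_blocks ns xs ! i = take (ns ! i) (drop (sum_list (take i ns)) xs)"
proof (induction ns arbitrary: xs i)
  case (Cons n ns)
  then show ?case by (cases i) (auto simp: add.commute)
qed simp

lemma take_drop_eq_map_nth:
  "i + l \<le> length xs \<Longrightarrow> take l (drop i xs) = map ((!) xs) [i..<i + l]"
  by (rule nth_equalityI) auto

lemma sum_list_take_Suc_le: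
  fixes ns :: "nat list"
  assumes "i < length ns"
  shows "sum_list (take i ns) + ns ! i \<le> sum_list ns"
proof -
  have "sum_list (take i ns) + ns ! i = sum_list (take (Suc i) ns)"
    using assms by (simp add: take_Suc_conv_app_nth)
  also have "\<dots> \<le> sum_list (take (Suc i) ns) + sum_list (drop (Suc i) ns)"
    by simp
  finally show ?thesis
    by (metis append_take_drop_id sum_list_append)
qed

lemma length_nth_eq: "map length vs = ns \<Longrightarrow> i < length ns \<Longrightarrow> length (vs ! i) = ns ! i"
  by auto

text \<open>A relation between tuples of lengths \<open>ns\<close> is encoded by the set of their concatenations, a
subset of \<open>M\<^bsup>sum_list ns\<^esup>\<close>; \<open>split_blocks ns\<close> recovers the tuple.\<close>

definition definable_rel :: "(nat \<Rightarrow> 'a list set set) \<Rightarrow> nat list \<Rightarrow> ('a list list \<Rightarrow> bool) \<Rightarrow> bool" where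
  "definable_rel D ns P \<longleftrightarrow> {xs \<in> Mn (sum_list ns). P (split_blocks ns xs)} \<in> D (sum_list ns)"

definition def_basis ::
    "(nat \<Rightarrow> 'a list set set) \<Rightarrow> nat \<Rightarrow> nat \<Rightarrow> 'a list topology \<Rightarrow> 'a list set \<Rightarrow> ('a list \<Rightarrow> 'a list set) \<Rightarrow> bool"
  where "def_basis D m n \<tau> T B \<longleftrightarrow> def_family D m n T B \<and> (\<forall>t\<in>T. openin \<tau> (B t)) \<and>
    (\<forall>U. openin \<tau> U \<longrightarrow> (\<forall>x\<in>U. \<exists>t\<in>T. x \<in> B t \<and> B t \<subseteq> U))"

lemma def_top_space_iff_basis:
  "def_top_space D n \<tau> \<longleftrightarrow> topspace \<tau> \<in> D n \<and> (\<exists>m T B. def_basis D m n \<tau> T B)"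
  unfolding def_top_space_def def_basis_def by blast

lemma closure_of_basis:
  assumes "def_basis D m n \<tau> T B"
  shows "\<tau> closure_of A = {y \<in> topspace \<tau>. \<forall>t\<in>T. y \<in> B t \<longrightarrow> (\<exists>a\<in>A. a \<in> B t)}"
proof (intro Set.set_eqI iffI)
  fix y
  assume "y \<in> \<tau> closure_of A"
  then show "y \<in> {y \<in> topspace \<tau>. \<forall>t\<in>T. y \<in> B t \<longrightarrow> (\<exists>a\<in>A. a \<in> B t)}"
    using assms unfolding def_basis_def in_closure_of by blast
next
  fix y
  assume y: "y \<in> {y \<in> topspace \<tau>. \<forall>t\<in>T. y \<in> B t \<longrightarrow> (\<exists>a\<in>A. a \<in> B t)}"
  show "y \<in> \<tau> closure_of A"
    unfolding in_closure_of
  proof (intro conjI allI impI)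
    fix U
    assume "y \<in> U \<and> openin \<tau> U"
    then obtain t where "t \<in> T" "y \<in> B t" "B t \<subseteq> U"
      using assms unfolding def_basis_def by blast
    then show "\<exists>a. a \<in> A \<and> a \<in> U"
      using y by blast
  qed (use y in blast)
qed

definition filtered_family :: "'i set \<Rightarrow> ('i \<Rightarrow> 'b set) \<Rightarrow> bool" where
  "filtered_family T C \<longleftrightarrow> (\<forall>s\<in>T. \<forall>t\<in>T. \<exists>u\<in>T. C u \<subseteq> C s \<inter> C t)"

lemma filtered_family_mono:
  assumes "filtered_family T C" and "\<And>s t. s \<in> T \<Longrightarrow> t \<in> T \<Longrightarrow> C s \<subseteq> C t \<Longrightarrow> C' s \<subseteq> C' t"
  shows "filtered_family T C'"
  using assms unfolding filtered_family_def by (meson le_inf_iff)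

lemma filtered_family_basis_at:
  assumes "def_basis D m n \<tau> T B"
  shows "filtered_family {t \<in> T. x \<in> B t} B"
  unfolding filtered_family_def
proof (intro ballI)
  fix s t
  assume "s \<in> {t \<in> T. x \<in> B t}" "t \<in> {t \<in> T. x \<in> B t}"
  then have "openin \<tau> (B s \<inter> B t)" "x \<in> B s \<inter> B t"
    using assms unfolding def_basis_def by auto
  then obtain u where "u \<in> T" "x \<in> B u" "B u \<subseteq> B s \<inter> B t"
    using assms unfolding def_basis_def by meson
  then show "\<exists>u\<in>{t \<in> T. x \<in> B t}. B u \<subseteq> B s \<inter> B t"
    by blast
qed

lemma def_compactI:
  assumes "\<And>m T C. def_family D m n T C \<Longrightarrow> T \<noteq> {} \<Longrightarrow> (\<And>t. t \<in> T \<Longrightarrow> closedin \<tau> (C t)) \<Longrightarrow>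
      (\<And>t. t \<in> T \<Longrightarrow> C t \<noteq> {}) \<Longrightarrow> filtered_family T C \<Longrightarrow> (\<Inter>t\<in>T. C t) \<noteq> {}"
  shows "def_compact D n \<tau>"
  using assms unfolding def_compact_def filtered_family_def by blast

lemma def_compactD:
  assumes "def_compact D n \<tau>" "def_family D m n T C" "T \<noteq> {}" "\<And>t. t \<in> T \<Longrightarrow> closedin \<tau> (C t)"
    "\<And>t. t \<in> T \<Longrightarrow> C t \<noteq> {}" "filtered_family T C"
  shows "(\<Inter>t\<in>T. C t) \<noteq> {}"
  using assms unfolding def_compact_def filtered_family_def by blast

locale definable_structure =
  fixes D :: "nat \<Rightarrow> 'a list set set"
  assumes structure_on: "structure_on D"
    and singleton_definable: "{[a]} \<in> D 1"
begin

lemma D_subset_Mn: "S \<in> D n \<Longrightarrow> S \<subseteq> Mn n"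
  using structure_on by (simp add: structure_on_def)

lemma D_length: "S \<in> D n \<Longrightarrow> x \<in> S \<Longrightarrow> length x = n"
  using D_subset_Mn by fastforce

lemma Mn_definable: "Mn n \<in> D n"
  using structure_on by (simp add: structure_on_def)

lemma D_Un: "S \<in> D n \<Longrightarrow> T \<in> D n \<Longrightarrow> S \<union> T \<in> D n"
  using structure_on by (simp add: structure_on_def)

lemma D_Diff: "S \<in> D n \<Longrightarrow> Mn n - S \<in> D n"
  using structure_on by (simp add: structure_on_def)

lemma D_Int:
  assumes "S \<in> D n" "T \<in> D n"
  shows "S \<inter> T \<in> D n"
proof -
  have "S \<inter> T = Mn n - ((Mn n - S) \<union> (Mn n - T))"
    using D_subset_Mn[OF assms(1)] by blast
  then show ?thesis
    using assms by (simp add: D_Diff D_Un)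
qed

lemma D_append: "S \<in> D n \<Longrightarrow> T \<in> D m \<Longrightarrow> {xs @ ys | xs ys. xs \<in> S \<and> ys \<in> T} \<in> D (n + m)"
  using structure_on by (simp add: structure_on_def)

lemma D_eq_coords: "i < n \<Longrightarrow> j < n \<Longrightarrow> {xs \<in> Mn n. xs ! i = xs ! j} \<in> D n"
  using structure_on by (simp add: structure_on_def)

lemma D_take: "S \<in> D (n + m) \<Longrightarrow> take n ` S \<in> D n"
proof (induction m arbitrary: S)
  case 0
  have "take n ` S = S"
    using D_length[OF 0[simplified]] by (force simp: image_iff)
  with 0 show ?case by simp
next
  case (Suc m)
  have "take (n + m) ` S \<in> D (n + m)"
    using Suc.prems structure_on unfolding structure_on_def by simp
  then have "take n ` take (n + m) ` S \<in> D n"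
    by (rule Suc.IH)
  moreover have "take n ` take (n + m) ` S = take n ` S"
    by (force simp: image_iff)
  ultimately show ?case by simp
qed

lemma D_INTER: "(\<And>j. j < (m::nat) \<Longrightarrow> A j \<in> D n) \<Longrightarrow> Mn n \<inter> (\<Inter>j<m. A j) \<in> D n"
proof (induction m)
  case 0
  then show ?case by (simp add: Mn_definable)
next
  case (Suc m)
  have "Mn n \<inter> (\<Inter>j<Suc m. A j) = (Mn n \<inter> (\<Inter>j<m. A j)) \<inter> A m"
    by (auto simp: lessThan_Suc)
  with Suc show ?case by (simp add: D_Int)
qed

lemma D_select:
  assumes S: "S \<in> D (length idx)" and idx: "\<forall>i\<in>set idx. i < n"
  shows "{xs \<in> Mn n. map ((!) xs) idx \<in> S} \<in> D n"
proof -
  let ?m = "length idx"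
  let ?E = "Mn (n + ?m) \<inter> (\<Inter>j<?m. {zs \<in> Mn (n + ?m). zs ! (idx ! j) = zs ! (n + j)})"
  let ?P = "{xs @ ys | xs ys. xs \<in> Mn n \<and> ys \<in> S} \<inter> ?E"
  have "?P \<in> D (n + ?m)"
    using idx by (intro D_INTER D_Int D_append S Mn_definable D_eq_coords) (auto simp: trans_less_add1)
  then have "take n ` ?P \<in> D n"
    by (rule D_take)
  moreover have "take n ` ?P = {xs \<in> Mn n. map ((!) xs) idx \<in> S}"
  proof (intro Set.set_eqI iffI)
    fix xs
    assume "xs \<in> take n ` ?P"
    then obtain ys zs where "xs = take n (zs @ ys)" "zs \<in> Mn n" "ys \<in> S" "zs @ ys \<in> ?E"
      by blast
    moreover have "ys = map ((!) zs) idx"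
      using calculation D_length[OF S] idx by (intro nth_equalityI) (auto simp: nth_append)
    ultimately show "xs \<in> {xs \<in> Mn n. map ((!) xs) idx \<in> S}"
      by simp
  next
    fix xs
    assume xs: "xs \<in> {xs \<in> Mn n. map ((!) xs) idx \<in> S}"
    then have "xs @ map ((!) xs) idx \<in> ?P"
      using idx by (auto simp: nth_append)
    then show "xs \<in> take n ` ?P"
      by (rule rev_image_eqI) (use xs in simp)
  qed
  ultimately show ?thesis by simp
qed

lemma singleton_list_definable: "{c} \<in> D (length c)"
proof (induction c)
  case Nil
  have "Mn 0 = {[]}"
    by auto
  then show ?case
    using Mn_definable[of 0] by (metis list.size(3))
next
  case (Cons a c)
  have "{xs @ ys | xs ys. xs \<in> {[a]} \<and> ys \<in> {c}} \<in> D (1 + length c)"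
    using D_append singleton_definable Cons by blast
  then show ?case by simp
qed

lemma definable_rel_cong:
  assumes "definable_rel D ns P"
    and "\<And>vs. map length vs = ns \<Longrightarrow> length vs = length ns \<Longrightarrow> P vs = Q vs"
  shows "definable_rel D ns Q"
proof -
  have eq: "P vs = Q vs" if "map length vs = ns" for vs
    using assms(2)[OF that] that by auto
  have "{xs \<in> Mn (sum_list ns). P (split_blocks ns xs)} = {xs \<in> Mn (sum_list ns). Q (split_blocks ns xs)}"
    using eq[OF map_length_split_blocks] by auto
  with assms(1) show ?thesis
    unfolding definable_rel_def by simp
qed

lemma definable_rel_conj:
  assumes "definable_rel D ns P" "definable_rel D ns Q"
  shows "definable_rel D ns (\<lambda>vs. P vs \<and> Q vs)"
proof -
  have "{xs \<in> Mn (sum_list ns). P (split_blocks ns xs) \<and> Q (split_blocks ns xs)} =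
      {xs \<in> Mn (sum_list ns). P (split_blocks ns xs)} \<inter> {xs \<in> Mn (sum_list ns). Q (split_blocks ns xs)}"
    by blast
  with assms show ?thesis
    unfolding definable_rel_def by (simp add: D_Int)
qed

lemma definable_rel_neg:
  assumes "definable_rel D ns P"
  shows "definable_rel D ns (\<lambda>vs. \<not> P vs)"
proof -
  have "{xs \<in> Mn (sum_list ns). \<not> P (split_blocks ns xs)} =
      Mn (sum_list ns) - {xs \<in> Mn (sum_list ns). P (split_blocks ns xs)}"
    by blast
  with assms show ?thesis
    unfolding definable_rel_def by (simp add: D_Diff)
qed

lemma definable_rel_disj:
  assumes "definable_rel D ns P" "definable_rel D ns Q"
  shows "definable_rel D ns (\<lambda>vs. P vs \<or> Q vs)"
proof -
  have "{xs \<in> Mn (sum_list ns). P (split_blocks ns xs) \<or> Q (split_blocks ns xs)} =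
      {xs \<in> Mn (sum_list ns). P (split_blocks ns xs)} \<union> {xs \<in> Mn (sum_list ns). Q (split_blocks ns xs)}"
    by blast
  with assms show ?thesis
    unfolding definable_rel_def by (simp add: D_Un)
qed

lemma definable_rel_imp:
  assumes "definable_rel D ns P" "definable_rel D ns Q"
  shows "definable_rel D ns (\<lambda>vs. P vs \<longrightarrow> Q vs)"
  by (rule definable_rel_cong[OF definable_rel_disj[OF definable_rel_neg[OF assms(1)] assms(2)]]) blast

lemma definable_rel_ex:
  assumes "definable_rel D ms P" and "ms = ns @ [m]"
  shows "definable_rel D ns (\<lambda>vs. \<exists>v. length v = m \<and> P (vs @ [v]))"
proof -
  let ?N = "sum_list ns"
  let ?S = "{zs \<in> Mn (?N + m). P (split_blocks (ns @ [m]) zs)}"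
  have split: "split_blocks (ns @ [m]) (xs @ v) = split_blocks ns xs @ [v]"
    if "length xs = ?N" "length v = m" for xs v :: "'a list"
    using that by (simp add: split_blocks_append)
  have "take ?N ` ?S \<in> D ?N"
    using assms unfolding definable_rel_def by (intro D_take) simp
  moreover have "take ?N ` ?S = {xs \<in> Mn ?N. \<exists>v. length v = m \<and> P (split_blocks ns xs @ [v])}"
  proof (intro Set.set_eqI iffI)
    fix xs
    assume "xs \<in> take ?N ` ?S"
    then obtain zs where zs: "zs \<in> ?S" "xs = take ?N zs"
      by blast
    define v where "v = drop ?N zs"
    have lens: "length xs = ?N" "length v = m" and "zs = xs @ v"
      using zs by (auto simp: v_def)
    then have "P (split_blocks ns xs @ [v])"
      using zs(1) split[OF lens] by simp
    with lens show "xs \<in> {xs \<in> Mn ?N. \<exists>v. length v = m \<and> P (split_blocks ns xs @ [v])}"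
      by auto
  next
    fix xs
    assume "xs \<in> {xs \<in> Mn ?N. \<exists>v. length v = m \<and> P (split_blocks ns xs @ [v])}"
    then obtain v where v: "length xs = ?N" "length v = m" "P (split_blocks ns xs @ [v])"
      by auto
    then have "xs @ v \<in> ?S"
      using split by simp
    then show "xs \<in> take ?N ` ?S"
      by (rule rev_image_eqI) (simp add: v(1))
  qed
  ultimately show ?thesis
    unfolding definable_rel_def by simp
qed

lemma definable_rel_all:
  assumes "definable_rel D ms P" and "ms = ns @ [m]"
  shows "definable_rel D ns (\<lambda>vs. \<forall>v. length v = m \<longrightarrow> P (vs @ [v]))"
  by (rule definable_rel_cong[OF definable_rel_neg[OF definable_rel_ex[OF definable_rel_neg[OF assms(1)] assms(2)]]])
    blast

lemma definable_rel_select: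
  assumes S: "S \<in> D (sum_list (map ((!) ns) idx))" and idx: "\<forall>i\<in>set idx. i < length ns"
  shows "definable_rel D ns (\<lambda>vs. concat (map ((!) vs) idx) \<in> S)"
proof -
  define block where "block i = [sum_list (take i ns)..<sum_list (take i ns) + ns ! i]" for i
  have "length (concat (map block idx)) = sum_list (map ((!) ns) idx)"
    by (simp add: block_def length_concat o_def)
  moreover have "\<forall>j\<in>set (concat (map block idx)). j < sum_list ns"
    using idx sum_list_take_Suc_le by (fastforce simp: block_def)
  ultimately have "{xs \<in> Mn (sum_list ns). map ((!) xs) (concat (map block idx)) \<in> S} \<in> D (sum_list ns)"
    using S by (intro D_select) simp_all
  moreover have eq: "map ((!) xs) (concat (map block idx)) = concat (map ((!) (split_blocks ns xs)) idx)"
    if "length xs = sum_list ns" for xs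
  proof -
    have "split_blocks ns xs ! i = map ((!) xs) (block i)" if "i \<in> set idx" for i
      using that idx \<open>length xs = sum_list ns\<close> sum_list_take_Suc_le[of i ns]
      by (simp add: nth_split_blocks take_drop_eq_map_nth block_def)
    then show ?thesis
      by (simp add: map_concat cong: map_cong)
  qed
  moreover have "{xs \<in> Mn (sum_list ns). map ((!) xs) (concat (map block idx)) \<in> S} =
      {xs \<in> Mn (sum_list ns). concat (map ((!) (split_blocks ns xs)) idx) \<in> S}"
    by (rule Collect_cong) (metis Mn_iff eq)
  ultimately show ?thesis
    unfolding definable_rel_def by simp
qed

lemma definable_rel_mem:
  "S \<in> D d \<Longrightarrow> d = ns ! i \<Longrightarrow> i < length ns \<Longrightarrow> definable_rel D ns (\<lambda>vs. vs ! i \<in> S)"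
  using definable_rel_select[of S ns "[i]"] by simp

lemma definable_rel_mem2:
  "S \<in> D d \<Longrightarrow> d = ns ! i + ns ! j \<Longrightarrow> i < length ns \<Longrightarrow> j < length ns \<Longrightarrow>
    definable_rel D ns (\<lambda>vs. vs ! i @ vs ! j \<in> S)"
  using definable_rel_select[of S ns "[i, j]"] by simp

lemma definable_rel_mem3:
  "S \<in> D d \<Longrightarrow> d = ns ! i + ns ! j + ns ! l \<Longrightarrow> i < length ns \<Longrightarrow> j < length ns \<Longrightarrow> l < length ns \<Longrightarrow>
    definable_rel D ns (\<lambda>vs. vs ! i @ vs ! j @ vs ! l \<in> S)"
  using definable_rel_select[of S ns "[i, j, l]"] by (simp add: add.assoc)

lemma definable_rel_set:
  assumes "definable_rel D [n] (\<lambda>vs. vs ! 0 \<in> S)" and "S \<subseteq> Mn n"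
  shows "S \<in> D n"
proof -
  have "{xs \<in> Mn (sum_list [n]). split_blocks [n] xs ! 0 \<in> S} = S"
    using assms(2) by auto
  with assms(1) show ?thesis
    unfolding definable_rel_def by simp
qed

lemma append_mem_family_iff:
  assumes "def_family D m N T S" and "length t = m"
  shows "t @ x \<in> {t @ x | t x. t \<in> T \<and> x \<in> S t} \<longleftrightarrow> t \<in> T \<and> x \<in> S t"
proof
  assume "t @ x \<in> {t @ x | t x. t \<in> T \<and> x \<in> S t}"
  then obtain t' x' where t'x': "t @ x = t' @ x'" "t' \<in> T" "x' \<in> S t'"
    by blast
  moreover have "length t' = m"
    using assms(1) t'x'(2) D_length unfolding def_family_def by blast
  ultimately show "t \<in> T \<and> x \<in> S t"
    using assms(2) by (metis append_eq_append_conv)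
qed blast

lemma def_family_iff_definable_rel:
  assumes "T \<in> D m" and "\<forall>t\<in>T. S t \<subseteq> Mn N"
  shows "def_family D m N T S \<longleftrightarrow> definable_rel D [m, N] (\<lambda>vs. vs ! 0 \<in> T \<and> vs ! 1 \<in> S (vs ! 0))"
proof -
  have "{t @ x | t x. t \<in> T \<and> x \<in> S t} =
      {xs \<in> Mn (m + N). take m xs \<in> T \<and> drop m xs \<in> S (take m xs)}"
  proof (intro Set.set_eqI iffI)
    fix xs
    assume "xs \<in> {t @ x | t x. t \<in> T \<and> x \<in> S t}"
    then show "xs \<in> {xs \<in> Mn (m + N). take m xs \<in> T \<and> drop m xs \<in> S (take m xs)}"
      using assms D_length by fastforce
  next
    fix xs
    assume "xs \<in> {xs \<in> Mn (m + N). take m xs \<in> T \<and> drop m xs \<in> S (take m xs)}"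
    then show "xs \<in> {t @ x | t x. t \<in> T \<and> x \<in> S t}"
      by (metis (mono_tags, lifting) append_take_drop_id mem_Collect_eq)
  qed
  moreover have "{xs \<in> Mn (sum_list [m, N]). split_blocks [m, N] xs ! 0 \<in> T \<and>
        split_blocks [m, N] xs ! 1 \<in> S (split_blocks [m, N] xs ! 0)} =
      {xs \<in> Mn (m + N). take m xs \<in> T \<and> drop m xs \<in> S (take m xs)}"
    by auto
  ultimately show ?thesis
    using assms unfolding def_family_def definable_rel_def by simp
qed

lemma definable_rel_family:
  assumes "def_family D m N T S" "ns ! i = m" "ns ! j = N" "i < length ns" "j < length ns"
  shows "definable_rel D ns (\<lambda>vs. vs ! i \<in> T \<and> vs ! j \<in> S (vs ! i))"
proof (rule definable_rel_cong)
  show "definable_rel D ns (\<lambda>vs. vs ! i @ vs ! j \<in> {t @ x | t x. t \<in> T \<and> x \<in> S t})"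
    using assms by (intro definable_rel_mem2) (simp_all add: def_family_def)
  show "(vs ! i @ vs ! j \<in> {t @ x | t x. t \<in> T \<and> x \<in> S t}) = (vs ! i \<in> T \<and> vs ! j \<in> S (vs ! i))"
    if "map length vs = ns" "length vs = length ns" for vs
    using append_mem_family_iff[OF assms(1)] length_nth_eq[OF that(1) assms(4)] assms(2) by simp
qed

lemma def_map_iff_def_family:
  assumes "X \<in> D N"
  shows "def_map D N m X f \<longleftrightarrow> def_family D N m X (\<lambda>x. {f x})"
  using assms unfolding def_map_def def_family_def by auto

lemma definable_rel_map:
  assumes "def_map D N m X f" "X \<in> D N" "ns ! i = N" "ns ! j = m" "i < length ns" "j < length ns"
  shows "definable_rel D ns (\<lambda>vs. vs ! i \<in> X \<and> vs ! j = f (vs ! i))"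
  using definable_rel_family[of N m X "\<lambda>x. {f x}"] assms by (simp add: def_map_iff_def_family)

lemma def_family_fibre:
  assumes fam: "def_family D m N T S" and t: "t \<in> T"
  shows "S t \<in> D N"
proof (rule definable_rel_set)
  have lt: "length t = m"
    using fam t D_length unfolding def_family_def by blast
  then have "definable_rel D [N, m] (\<lambda>vs. vs ! 1 \<in> {t} \<and> vs ! 1 \<in> T \<and> vs ! 0 \<in> S (vs ! 1))"
    by (intro definable_rel_family[OF fam] definable_rel_conj definable_rel_mem[OF singleton_list_definable])
      simp_all
  then show "definable_rel D [N] (\<lambda>vs. vs ! 0 \<in> S t)"
    by (rule definable_rel_cong[OF definable_rel_ex]) (use t lt in \<open>auto simp: nth_append\<close>)
  show "S t \<subseteq> Mn N"
    using fam t unfolding def_family_def by blast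
qed

lemma def_family_index_set:
  assumes fam: "def_family D m N T S" and x: "length x = N"
  shows "{t \<in> T. x \<in> S t} \<in> D m"
proof (rule definable_rel_set)
  have "definable_rel D [m, N] (\<lambda>vs. vs ! 1 \<in> {x} \<and> vs ! 0 \<in> T \<and> vs ! 1 \<in> S (vs ! 0))"
    using x by (intro definable_rel_family[OF fam] definable_rel_conj definable_rel_mem[OF singleton_list_definable])
      simp_all
  then show "definable_rel D [m] (\<lambda>vs. vs ! 0 \<in> {t \<in> T. x \<in> S t})"
    by (rule definable_rel_cong[OF definable_rel_ex]) (use x in \<open>auto simp: nth_append\<close>)
  show "{t \<in> T. x \<in> S t} \<subseteq> Mn m"
    using fam D_subset_Mn unfolding def_family_def by blast
qed

lemma def_family_restrict:
  assumes fam: "def_family D m N T S" and "T' \<in> D m" "T' \<subseteq> T"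
  shows "def_family D m N T' S"
proof -
  have "definable_rel D [m, N] (\<lambda>vs. vs ! 0 \<in> T' \<and> vs ! 0 \<in> T \<and> vs ! 1 \<in> S (vs ! 0))"
    using assms by (intro definable_rel_family[OF fam] definable_rel_conj definable_rel_mem) simp_all
  then have "definable_rel D [m, N] (\<lambda>vs. vs ! 0 \<in> T' \<and> vs ! 1 \<in> S (vs ! 0))"
    by (rule definable_rel_cong) (use assms(3) in blast)
  moreover have "\<forall>t\<in>T'. S t \<subseteq> Mn N"
    using fam assms(3) unfolding def_family_def by blast
  ultimately show ?thesis
    using assms(2) by (simp add: def_family_iff_definable_rel)
qed

lemma def_family_Int:
  assumes fam: "def_family D m N T F" and X: "X \<in> D N"
  shows "def_family D m N T (\<lambda>t. X \<inter> F t)"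
proof -
  have T: "T \<in> D m"
    using fam unfolding def_family_def by blast
  have "definable_rel D [m, N] (\<lambda>vs. vs ! 1 \<in> X \<and> vs ! 0 \<in> T \<and> vs ! 1 \<in> F (vs ! 0))"
    by (intro definable_rel_conj definable_rel_family[OF fam] definable_rel_mem[OF X]) simp_all
  then have "definable_rel D [m, N] (\<lambda>vs. vs ! 0 \<in> T \<and> vs ! 1 \<in> X \<inter> F (vs ! 0))"
    by (rule definable_rel_cong) auto
  moreover have "\<forall>t\<in>T. X \<inter> F t \<subseteq> Mn N"
    using fam unfolding def_family_def by blast
  ultimately show ?thesis
    using T by (simp add: def_family_iff_definable_rel)
qed

lemma def_family_image:
  assumes fam: "def_family D m N T S" and f: "def_map D N k X f" "X \<in> D N"
    and sub: "\<forall>t\<in>T. S t \<subseteq> X"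
  shows "def_family D m k T (\<lambda>t. f ` S t)"
proof -
  have "definable_rel D [m, k, N] (\<lambda>vs. (vs ! 0 \<in> T \<and> vs ! 2 \<in> S (vs ! 0)) \<and>
      vs ! 2 \<in> X \<and> vs ! 1 = f (vs ! 2))"
    by (intro definable_rel_conj definable_rel_family[OF fam] definable_rel_map[OF f]) simp_all
  then have "definable_rel D [m, k] (\<lambda>vs. vs ! 0 \<in> T \<and> vs ! 1 \<in> f ` S (vs ! 0))"
  proof (rule definable_rel_cong[OF definable_rel_ex])
    fix vs :: "'a list list"
    assume "length vs = length [m, k]"
    moreover have "length x = N" if "t \<in> T" "x \<in> S t" for t x
      using that sub D_length[OF f(2)] by blast
    ultimately show "(\<exists>v. length v = N \<and> ((vs @ [v]) ! 0 \<in> T \<and> (vs @ [v]) ! 2 \<in> S ((vs @ [v]) ! 0)) \<and>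
        (vs @ [v]) ! 2 \<in> X \<and> (vs @ [v]) ! 1 = f ((vs @ [v]) ! 2)) = (vs ! 0 \<in> T \<and> vs ! 1 \<in> f ` S (vs ! 0))"
      using sub by (auto simp: nth_append; blast)
  qed simp
  moreover have "\<forall>t\<in>T. f ` S t \<subseteq> Mn k"
    using sub f(1) unfolding def_map_def by blast
  moreover have "T \<in> D m"
    using fam unfolding def_family_def by blast
  ultimately show ?thesis
    by (simp add: def_family_iff_definable_rel)
qed

lemma def_family_const:
  assumes "S \<in> D N"
  shows "def_family D 0 N {[]} (\<lambda>_. S)"
  using assms singleton_list_definable[of "[]"] D_subset_Mn unfolding def_family_def by auto

lemma def_map_image:
  assumes "def_map D N k X f" "X \<in> D N" "S \<in> D N" "S \<subseteq> X"
  shows "f ` S \<in> D k"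
  using def_family_fibre[OF def_family_image[OF def_family_const[OF assms(3)] assms(1,2)]] assms(4)
  by blast

lemma def_family_basis_at:
  assumes "def_basis D m n \<tau> T B" and "length x = n"
  shows "def_family D m n {t \<in> T. x \<in> B t} B"
proof -
  have fam: "def_family D m n T B"
    using assms(1) unfolding def_basis_def by blast
  show ?thesis
    using def_family_index_set[OF fam assms(2)] by (rule def_family_restrict[OF fam]) blast
qed

lemma def_family_closure_of:
  assumes basis: "def_basis D mB N \<tau> TB B" and X: "topspace \<tau> \<in> D N" and A: "def_family D m N T A"
  shows "def_family D m N T (\<lambda>t. \<tau> closure_of A t)"
proof -
  have fam_B: "def_family D mB N TB B" and T: "T \<in> D m"
    using basis A unfolding def_basis_def def_family_def by blast+
  have "definable_rel D [m, N, mB, N]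
      (\<lambda>vs. (vs ! 0 \<in> T \<and> vs ! 3 \<in> A (vs ! 0)) \<and> vs ! 2 \<in> TB \<and> vs ! 3 \<in> B (vs ! 2))"
    by (intro definable_rel_conj definable_rel_family[OF A] definable_rel_family[OF fam_B]) simp_all
  then have "definable_rel D [m, N, mB]
      (\<lambda>vs. \<exists>a. length a = N \<and> (vs ! 0 \<in> T \<and> a \<in> A (vs ! 0)) \<and> vs ! 2 \<in> TB \<and> a \<in> B (vs ! 2))"
    by (rule definable_rel_cong[OF definable_rel_ex]) (simp_all add: nth_append)
  then have "definable_rel D [m, N, mB]
      (\<lambda>vs. vs ! 2 \<in> TB \<and> vs ! 1 \<in> B (vs ! 2) \<longrightarrow>
        (\<exists>a. length a = N \<and> (vs ! 0 \<in> T \<and> a \<in> A (vs ! 0)) \<and> vs ! 2 \<in> TB \<and> a \<in> B (vs ! 2)))"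
    by (intro definable_rel_imp definable_rel_family[OF fam_B]) simp_all
  then have "definable_rel D [m, N]
      (\<lambda>vs. \<forall>s. length s = mB \<longrightarrow> (s \<in> TB \<and> vs ! 1 \<in> B s \<longrightarrow>
        (\<exists>a. length a = N \<and> (vs ! 0 \<in> T \<and> a \<in> A (vs ! 0)) \<and> s \<in> TB \<and> a \<in> B s)))"
    by (rule definable_rel_cong[OF definable_rel_all]) (simp_all add: nth_append)
  then have "definable_rel D [m, N] (\<lambda>vs. vs ! 0 \<in> T \<and> vs ! 1 \<in> topspace \<tau> \<and>
      (\<forall>s. length s = mB \<longrightarrow> (s \<in> TB \<and> vs ! 1 \<in> B s \<longrightarrow>
        (\<exists>a. length a = N \<and> (vs ! 0 \<in> T \<and> a \<in> A (vs ! 0)) \<and> s \<in> TB \<and> a \<in> B s))))"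
    by (intro definable_rel_conj definable_rel_mem[OF T] definable_rel_mem[OF X]) simp_all
  then have "definable_rel D [m, N] (\<lambda>vs. vs ! 0 \<in> T \<and> vs ! 1 \<in> \<tau> closure_of A (vs ! 0))"
  proof (rule definable_rel_cong)
    fix vs :: "'a list list"
    assume "map length vs = [m, N]" "length vs = length [m, N]"
    moreover have "length a = N" if "t \<in> T" "a \<in> A t" for t a
      using A that unfolding def_family_def by (metis Mn_iff subsetD)
    moreover have "length s = mB" if "s \<in> TB" for s
      using fam_B that D_length unfolding def_family_def by blast
    ultimately show "(vs ! 0 \<in> T \<and> vs ! 1 \<in> topspace \<tau> \<and>
      (\<forall>s. length s = mB \<longrightarrow> (s \<in> TB \<and> vs ! 1 \<in> B s \<longrightarrow>
        (\<exists>a. length a = N \<and> (vs ! 0 \<in> T \<and> a \<in> A (vs ! 0)) \<and> s \<in> TB \<and> a \<in> B s)))) =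
      (vs ! 0 \<in> T \<and> vs ! 1 \<in> \<tau> closure_of A (vs ! 0))"
      unfolding closure_of_basis[OF basis] by blast
  qed
  moreover have "\<forall>t\<in>T. \<tau> closure_of A t \<subseteq> Mn N"
    by (intro ballI order_trans[OF closure_of_subset_topspace D_subset_Mn[OF X]])
  ultimately show ?thesis
    using T by (simp add: def_family_iff_definable_rel)
qed

lemma def_top_space_indiscrete:
  assumes "S \<in> D N"
  shows "def_top_space D N (indiscrete_topology S)"
  unfolding def_top_space_iff_basis def_basis_def
  using assms def_family_const[OF assms] by (auto simp: openin_indiscrete_topology)

lemma def_map_indicator:
  assumes "X \<in> D N" "A \<in> D N" "length p = M" "length q = M"
  shows "def_map D N M X (\<lambda>x. if x \<in> A then p else q)"
proof -
  have "definable_rel D [N, M]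
      (\<lambda>vs. vs ! 0 \<in> X \<and> (vs ! 0 \<in> A \<and> vs ! 1 \<in> {p} \<or> \<not> vs ! 0 \<in> A \<and> vs ! 1 \<in> {q}))"
    using assms
    by (intro definable_rel_conj definable_rel_disj definable_rel_neg definable_rel_mem
        definable_rel_mem[OF singleton_list_definable]) simp_all
  then have "definable_rel D [N, M] (\<lambda>vs. vs ! 0 \<in> X \<and> vs ! 1 \<in> {if vs ! 0 \<in> A then p else q})"
    by (rule definable_rel_cong) auto
  then show ?thesis
    using assms by (simp add: def_map_iff_def_family def_family_iff_definable_rel)
qed

lemma def_top_space_two_points:
  assumes "length p = M" "length q = M"
  shows "def_top_space D M (indiscrete_topology {p, q})"
proof -
  have "{p} \<in> D M" "{q} \<in> D M"
    using singleton_list_definable[of p] singleton_list_definable[of q] assms by simp_all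
  then have "{p} \<union> {q} \<in> D M"
    by (rule D_Un)
  then show ?thesis
    by (metis def_top_space_indiscrete insert_is_Un)
qed

lemma def_cont_map_indicator:
  assumes "topspace X \<in> D N" "A \<in> D N" "length p = M" "length q = M"
  shows "def_cont_map D N M X (indiscrete_topology {p, q}) (\<lambda>x. if x \<in> A then p else q)"
  unfolding def_cont_map_def
  using assms by (simp add: def_map_indicator continuous_map_indiscrete_topology image_subset_iff)

end

section \<open>Definable quotients of definable topological groups\<close>

text \<open>Two distinct elements of \<open>M\<close> are needed to build a two-point target space for indicator maps.\<close>

locale definable_quotient = definable_structure D
  for D :: "nat \<Rightarrow> 'a list set set" +
  fixes n :: nat and G :: "'a list monoid" (structure) and \<tau> :: "'a list topology" and H :: "'a list set"
    and k :: nat and \<tau>Q :: "'a list topology" and \<pi> :: "'a list \<Rightarrow> 'a list"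
  assumes top_group: "def_top_group D n G \<tau>"
    and subgroup_H: "subgroup H G"
    and H_definable: "H \<in> D n"
    and quotient: "is_def_quotient D n G \<tau> H k \<tau>Q \<pi>"
    and nontrivial: "\<exists>a b :: 'a. a \<noteq> b"

sublocale definable_quotient \<subseteq> group G
  using top_group unfolding def_top_group_def by blast

context definable_quotient
begin

lemma topspace_eq [simp]: "topspace \<tau> = carrier G"
  using top_group unfolding def_top_group_def by blast

lemma carrier_definable: "carrier G \<in> D n"
  using top_group unfolding def_top_group_def def_top_space_def by simp

lemma length_carrier: "g \<in> carrier G \<Longrightarrow> length g = n"
  using D_length[OF carrier_definable] .

lemma H_subset: "H \<subseteq> carrier G"
  using subgroup_H by (rule subgroup.subset)

lemma continuous_map_mult: "continuous_map (prod_topology \<tau> \<tau>) \<tau> (\<lambda>(x, y). x \<otimes> y)"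
  using top_group unfolding def_top_group_def by blast

lemma continuous_map_inv_mult: "continuous_map (prod_topology \<tau> \<tau>) \<tau> (\<lambda>(h, x). inv h \<otimes> x)"
proof -
  have "continuous_map \<tau> \<tau> (\<lambda>x. inv x)"
    using top_group unfolding def_top_group_def by blast
  then have "continuous_map (prod_topology \<tau> \<tau>) (prod_topology \<tau> \<tau>) (\<lambda>(h, x). (inv h, x))"
    by (auto intro!: continuous_map_pairedI continuous_map_snd
        continuous_map_compose[OF continuous_map_fst, unfolded o_def] simp: case_prod_unfold)
  from continuous_map_compose[OF this continuous_map_mult] show ?thesis
    by (simp add: o_def case_prod_unfold)
qed

lemma continuous_map_left_mult:
  assumes "b \<in> carrier G"
  shows "continuous_map \<tau> \<tau> (\<lambda>x. b \<otimes> x)"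
proof -
  have "continuous_map \<tau> (prod_topology \<tau> \<tau>) (\<lambda>x. (b, x))"
    using assms by (intro continuous_map_pairedI) auto
  from continuous_map_compose[OF this continuous_map_mult] show ?thesis
    by (simp add: o_def)
qed

lemma continuous_map_right_mult:
  assumes "b \<in> carrier G"
  shows "continuous_map \<tau> \<tau> (\<lambda>x. x \<otimes> b)"
proof -
  have "continuous_map \<tau> (prod_topology \<tau> \<tau>) (\<lambda>x. (x, b))"
    using assms by (intro continuous_map_pairedI) auto
  from continuous_map_compose[OF this continuous_map_mult] show ?thesis
    by (simp add: o_def)
qed

lemma openin_set_mult:
  assumes A: "A \<subseteq> carrier G" and U: "openin \<tau> U"
  shows "openin \<tau> (A <#> U)"
proof -
  have UG: "U \<subseteq> carrier G"
    using openin_subset[OF U] by simp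
  have "A <#> U = (\<Union>a\<in>A. {x \<in> topspace \<tau>. inv a \<otimes> x \<in> U})"
  proof (intro Set.set_eqI iffI)
    fix x
    assume "x \<in> A <#> U"
    then obtain a u where au: "a \<in> A" "u \<in> U" "x = a \<otimes> u"
      unfolding set_mult_def by blast
    moreover have "a \<in> carrier G" "u \<in> carrier G"
      using au A UG by auto
    ultimately have "inv a \<otimes> x = u" "x \<in> carrier G"
      by (simp_all add: m_assoc[symmetric])
    with au show "x \<in> (\<Union>a\<in>A. {x \<in> topspace \<tau>. inv a \<otimes> x \<in> U})"
      by (metis (mono_tags, lifting) UN_iff mem_Collect_eq topspace_eq)
  next
    fix x
    assume "x \<in> (\<Union>a\<in>A. {x \<in> topspace \<tau>. inv a \<otimes> x \<in> U})"
    then obtain a where a: "a \<in> A" "x \<in> carrier G" "inv a \<otimes> x \<in> U"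
      by auto
    moreover have "x = a \<otimes> (inv a \<otimes> x)"
      using a A by (auto simp: m_assoc[symmetric])
    ultimately show "x \<in> A <#> U"
      unfolding set_mult_def by blast
  qed
  moreover have "openin \<tau> {x \<in> topspace \<tau>. inv a \<otimes> x \<in> U}" if "a \<in> A" for a
    using that A U by (intro openin_continuous_map_preimage[OF continuous_map_left_mult]) auto
  ultimately show ?thesis
    by auto
qed

lemma definable_rel_mult:
  assumes "ns ! i = n" "ns ! j = n" "ns ! l = n" "i < length ns" "j < length ns" "l < length ns"
  shows "definable_rel D ns (\<lambda>vs. vs ! i \<in> carrier G \<and> vs ! j \<in> carrier G \<and> vs ! l = vs ! i \<otimes> vs ! j)"
proof (rule definable_rel_cong)
  let ?M = "{x @ y @ (x \<otimes> y) | x y. x \<in> carrier G \<and> y \<in> carrier G}"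
  show "definable_rel D ns (\<lambda>vs. vs ! i @ vs ! j @ vs ! l \<in> ?M)"
    using assms top_group unfolding def_top_group_def by (intro definable_rel_mem3) auto
  have "x @ y @ z \<in> ?M \<longleftrightarrow> x \<in> carrier G \<and> y \<in> carrier G \<and> z = x \<otimes> y"
    if "length x = n" "length y = n" for x y z
  proof
    assume "x @ y @ z \<in> ?M"
    then obtain x' y' where eq: "x @ y @ z = x' @ y' @ (x' \<otimes> y')" and G: "x' \<in> carrier G" "y' \<in> carrier G"
      by blast
    then have "x = x'" "y @ z = y' @ (x' \<otimes> y')"
      using append_eq_append_conv[of x x'] that length_carrier by auto
    moreover then have "y = y'" "z = x' \<otimes> y'"
      using append_eq_append_conv[of y y'] that length_carrier G by auto
    ultimately show "x \<in> carrier G \<and> y \<in> carrier G \<and> z = x \<otimes> y"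
      using G by simp
  qed blast
  then show "(vs ! i @ vs ! j @ vs ! l \<in> ?M) = (vs ! i \<in> carrier G \<and> vs ! j \<in> carrier G \<and> vs ! l = vs ! i \<otimes> vs ! j)"
    if "map length vs = ns" "length vs = length ns" for vs
    using length_nth_eq[OF that(1)] assms by simp
qed

lemma def_family_mult_preimage:
  assumes F: "def_family D m n T F" and X: "X \<in> D n" "X \<subseteq> carrier G" and C: "C \<in> D n" "C \<subseteq> carrier G"
  shows "def_family D m n T (\<lambda>t. {x \<in> X. \<exists>c\<in>C. x \<otimes> c \<in> F t})"
proof -
  have T: "T \<in> D m"
    using F unfolding def_family_def by blast
  have "definable_rel D [m, n, n, n] (\<lambda>vs. (vs ! 0 \<in> T \<and> vs ! 3 \<in> F (vs ! 0)) \<and> vs ! 2 \<in> C \<and>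
      vs ! 1 \<in> carrier G \<and> vs ! 2 \<in> carrier G \<and> vs ! 3 = vs ! 1 \<otimes> vs ! 2)"
    by (intro definable_rel_conj definable_rel_family[OF F] definable_rel_mem[OF C(1)] definable_rel_mult)
      simp_all
  then have "definable_rel D [m, n, n] (\<lambda>vs. \<exists>p. length p = n \<and> (vs ! 0 \<in> T \<and> p \<in> F (vs ! 0)) \<and>
      vs ! 2 \<in> C \<and> vs ! 1 \<in> carrier G \<and> vs ! 2 \<in> carrier G \<and> p = vs ! 1 \<otimes> vs ! 2)"
    by (rule definable_rel_cong[OF definable_rel_ex]) (simp_all add: nth_append)
  then have "definable_rel D [m, n] (\<lambda>vs. \<exists>c. length c = n \<and> (\<exists>p. length p = n \<and>
      (vs ! 0 \<in> T \<and> p \<in> F (vs ! 0)) \<and> c \<in> C \<and> vs ! 1 \<in> carrier G \<and> c \<in> carrier G \<and> p = vs ! 1 \<otimes> c))"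
    by (rule definable_rel_cong[OF definable_rel_ex]) (simp_all add: nth_append)
  then have "definable_rel D [m, n] (\<lambda>vs. vs ! 0 \<in> T \<and> vs ! 1 \<in> X \<and> (\<exists>c. length c = n \<and> (\<exists>p. length p = n \<and>
      (vs ! 0 \<in> T \<and> p \<in> F (vs ! 0)) \<and> c \<in> C \<and> vs ! 1 \<in> carrier G \<and> c \<in> carrier G \<and> p = vs ! 1 \<otimes> c)))"
    by (intro definable_rel_conj definable_rel_mem[OF T] definable_rel_mem[OF X(1)]) simp_all
  then have "definable_rel D [m, n] (\<lambda>vs. vs ! 0 \<in> T \<and> vs ! 1 \<in> {x \<in> X. \<exists>c\<in>C. x \<otimes> c \<in> F (vs ! 0)})"
    by (rule definable_rel_cong) (use X(2) C(2) length_carrier in blast)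
  moreover have "\<forall>t\<in>T. {x \<in> X. \<exists>c\<in>C. x \<otimes> c \<in> F t} \<subseteq> Mn n"
    using D_subset_Mn[OF X(1)] by blast
  ultimately show ?thesis
    using T by (simp add: def_family_iff_definable_rel)
qed

lemma mult_preimage_definable:
  assumes "X \<in> D n" "X \<subseteq> carrier G" "C \<in> D n" "C \<subseteq> carrier G" "F \<in> D n"
  shows "{x \<in> X. \<exists>c\<in>C. x \<otimes> c \<in> F} \<in> D n"
  using def_family_fibre[OF def_family_mult_preimage[OF def_family_const[OF assms(5)] assms(1-4)]] by simp

lemma r_coset_definable:
  assumes a: "a \<in> carrier G"
  shows "H #> a \<in> D n"
proof -
  have "{inv a} \<in> D n"
    using singleton_list_definable[of "inv a"] a length_carrier by simp
  then have "{x \<in> carrier G. \<exists>c\<in>{inv a}. x \<otimes> c \<in> H} \<in> D n"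
    using a by (intro mult_preimage_definable carrier_definable H_definable H_subset) auto
  moreover have "{x \<in> carrier G. \<exists>c\<in>{inv a}. x \<otimes> c \<in> H} = H #> a"
    using subgroup.rcos_module[OF subgroup_H is_group a] r_coset_subset_G[OF H_subset a] by auto
  ultimately show ?thesis
    by simp
qed

lemmas quotient_parts = quotient[unfolded is_def_quotient_def]

lemma def_top_space_quotient: "def_top_space D k \<tau>Q"
  using quotient_parts by (rule conjunct1)

lemma def_cont_map_quotient: "def_cont_map D n k \<tau> \<tau>Q \<pi>"
  using quotient_parts[THEN conjunct2] by (rule conjunct1)

lemma quotient_mult: "h \<in> H \<Longrightarrow> g \<in> carrier G \<Longrightarrow> \<pi> (h \<otimes> g) = \<pi> g"
  using quotient_parts[THEN conjunct2, THEN conjunct2, THEN conjunct1] by blast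

lemmas quotient_universal = quotient_parts[THEN conjunct2, THEN conjunct2, THEN conjunct2]

lemma Q_definable: "topspace \<tau>Q \<in> D k"
  using def_top_space_quotient unfolding def_top_space_def by (rule conjunct1)

lemma continuous_map_quotient: "continuous_map \<tau> \<tau>Q \<pi>"
  using def_cont_map_quotient unfolding def_cont_map_def by (rule conjunct1)

lemma def_map_quotient: "def_map D n k (carrier G) \<pi>"
  using def_cont_map_quotient unfolding def_cont_map_def by simp

lemma quotient_factor:
  assumes "def_top_space D m \<tau>Y" "def_cont_map D n m \<tau> \<tau>Y \<phi>"
    and "\<And>g h. g \<in> carrier G \<Longrightarrow> h \<in> H \<Longrightarrow> \<phi> (h \<otimes> g) = \<phi> g"
  shows "\<exists>\<psi>. def_cont_map D k m \<tau>Q \<tau>Y \<psi> \<and> (\<forall>g\<in>carrier G. \<phi> g = \<psi> (\<pi> g))"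
  using quotient_universal[rule_format, of m \<tau>Y \<phi>] assms by blast

lemma quotient_factor_unique:
  assumes "def_top_space D m \<tau>Y" "def_cont_map D n m \<tau> \<tau>Y \<phi>"
    and "\<And>g h. g \<in> carrier G \<Longrightarrow> h \<in> H \<Longrightarrow> \<phi> (h \<otimes> g) = \<phi> g"
    and "def_cont_map D k m \<tau>Q \<tau>Y \<psi>1" "\<And>g. g \<in> carrier G \<Longrightarrow> \<phi> g = \<psi>1 (\<pi> g)"
    and "def_cont_map D k m \<tau>Q \<tau>Y \<psi>2" "\<And>g. g \<in> carrier G \<Longrightarrow> \<phi> g = \<psi>2 (\<pi> g)"
    and "y \<in> topspace \<tau>Q"
  shows "\<psi>1 y = \<psi>2 y"
  using quotient_universal[rule_format, of m \<tau>Y \<phi>, THEN conjunct2, rule_format, of \<psi>1 \<psi>2 y] assms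
  by blast

text \<open>Every map into a two-point indiscrete space is continuous, so the universal property of the
quotient applies to the indicator of any definable \<open>H\<close>-invariant set.\<close>

lemma obtain_two_points:
  obtains p q :: "'a list" where "p \<noteq> q" "length p = 1" "length q = 1"
proof -
  obtain a b :: 'a where "a \<noteq> b"
    using nontrivial by blast
  then show ?thesis
    by (intro that[of "[a]" "[b]"]) simp_all
qed

lemma quotient_surjective: "\<pi> ` carrier G = topspace \<tau>Q"
proof -
  obtain p q :: "'a list" where pq: "p \<noteq> q" "length p = 1" "length q = 1"
    by (rule obtain_two_points)
  let ?Y = "indiscrete_topology {p, q}"
  have image_sub: "\<pi> ` carrier G \<subseteq> topspace \<tau>Q"
    using continuous_map_image_subset_topspace[OF continuous_map_quotient] by simp
  have image_definable: "\<pi> ` carrier G \<in> D k"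
    using def_map_image[OF def_map_quotient carrier_definable carrier_definable] by simp
  have "(if y \<in> topspace \<tau>Q then p else q) = (if y \<in> \<pi> ` carrier G then p else q)"
    if "y \<in> topspace \<tau>Q" for y
  proof (rule quotient_factor_unique[of 1 ?Y "\<lambda>g. if g \<in> carrier G then p else q"
        "\<lambda>y. if y \<in> topspace \<tau>Q then p else q" "\<lambda>y. if y \<in> \<pi> ` carrier G then p else q"])
    show "def_top_space D 1 ?Y"
      by (rule def_top_space_two_points[OF pq(2,3)])
    show "def_cont_map D n 1 \<tau> ?Y (\<lambda>g. if g \<in> carrier G then p else q)"
      using pq carrier_definable by (intro def_cont_map_indicator) simp_all
    show "def_cont_map D k 1 \<tau>Q ?Y (\<lambda>y. if y \<in> topspace \<tau>Q then p else q)"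
      using pq Q_definable by (intro def_cont_map_indicator) simp_all
    show "def_cont_map D k 1 \<tau>Q ?Y (\<lambda>y. if y \<in> \<pi> ` carrier G then p else q)"
      using pq Q_definable image_definable by (intro def_cont_map_indicator) simp_all
  qed (use that image_sub H_subset in auto)
  with pq(1) image_sub show ?thesis
    by (metis (full_types) subset_antisym subsetI)
qed

lemma left_mult_mem_r_coset_iff:
  assumes h: "h \<in> H" and g: "g \<in> carrier G" and a: "a \<in> carrier G"
  shows "h \<otimes> g \<in> H #> a \<longleftrightarrow> g \<in> H #> a"
proof -
  have hG: "h \<in> carrier G"
    using h H_subset by blast
  have "h \<otimes> g \<in> H #> a \<longleftrightarrow> h \<otimes> (g \<otimes> inv a) \<in> H"
    using subgroup.rcos_module[OF subgroup_H is_group a] hG g a by (simp add: m_assoc)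
  also have "\<dots> \<longleftrightarrow> g \<otimes> inv a \<in> H"
  proof
    assume "h \<otimes> (g \<otimes> inv a) \<in> H"
    then have "inv h \<otimes> (h \<otimes> (g \<otimes> inv a)) \<in> H"
      using h subgroup_H by (simp add: subgroup.m_closed subgroup.m_inv_closed)
    then show "g \<otimes> inv a \<in> H"
      using hG g a by (simp add: m_assoc[symmetric])
  qed (use h subgroup_H in \<open>simp add: subgroup.m_closed\<close>)
  also have "\<dots> \<longleftrightarrow> g \<in> H #> a"
    using subgroup.rcos_module[OF subgroup_H is_group a] g by simp
  finally show ?thesis .
qed

lemma quotient_eq_imp_r_coset:
  assumes a: "a \<in> carrier G" and c: "c \<in> carrier G" and eq: "\<pi> c = \<pi> a"
  shows "c \<in> H #> a"
proof -
  obtain p q :: "'a list" where pq: "p \<noteq> q" "length p = 1" "length q = 1"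
    by (rule obtain_two_points)
  let ?\<phi> = "\<lambda>g. if g \<in> H #> a then p else q"
  have "def_cont_map D n 1 \<tau> (indiscrete_topology {p, q}) ?\<phi>"
    using pq carrier_definable r_coset_definable[OF a] by (intro def_cont_map_indicator) simp_all
  moreover have "?\<phi> (h \<otimes> g) = ?\<phi> g" if "g \<in> carrier G" "h \<in> H" for g h
    using left_mult_mem_r_coset_iff[OF that(2,1) a] by simp
  ultimately obtain \<psi> where \<psi>: "\<forall>g\<in>carrier G. ?\<phi> g = \<psi> (\<pi> g)"
    using quotient_factor[OF def_top_space_two_points[OF pq(2,3)]] by blast
  then have "?\<phi> c = ?\<phi> a"
    using a c eq by simp
  moreover have "a \<in> H #> a"
    using rcos_self[OF a subgroup_H] .
  ultimately show ?thesis
    using pq(1) by (auto split: if_splits)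
qed

lemma quotient_vimage_image:
  assumes S: "S \<subseteq> carrier G"
  shows "{g \<in> carrier G. \<pi> g \<in> \<pi> ` S} = H <#> S"
proof (intro Set.set_eqI iffI)
  fix g
  assume "g \<in> {g \<in> carrier G. \<pi> g \<in> \<pi> ` S}"
  then obtain s where s: "g \<in> carrier G" "s \<in> S" "\<pi> g = \<pi> s"
    by auto
  then have "g \<in> H #> s"
    using quotient_eq_imp_r_coset S by blast
  with s(2) show "g \<in> H <#> S"
    unfolding r_coset_def set_mult_def by blast
next
  fix g
  assume "g \<in> H <#> S"
  then obtain h s where "h \<in> H" "s \<in> S" "g = h \<otimes> s"
    unfolding set_mult_def by blast
  then show "g \<in> {g \<in> carrier G. \<pi> g \<in> \<pi> ` S}"
    using S H_subset quotient_mult by auto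
qed

lemma obtain_def_basis:
  obtains mB TB B where "def_basis D mB n \<tau> TB B"
  using top_group unfolding def_top_group_def def_top_space_iff_basis by blast

lemma def_top_space_quotient_topology: "def_top_space D k (quotient_topology \<tau> \<pi> (topspace \<tau>Q))"
proof -
  let ?QT = "quotient_topology \<tau> \<pi> (topspace \<tau>Q)"
  obtain mB TB B where basis: "def_basis D mB n \<tau> TB B"
    by (rule obtain_def_basis)
  have B: "def_family D mB n TB B" "\<And>t. t \<in> TB \<Longrightarrow> openin \<tau> (B t)"
    and base: "\<And>U x. openin \<tau> U \<Longrightarrow> x \<in> U \<Longrightarrow> \<exists>t\<in>TB. x \<in> B t \<and> B t \<subseteq> U"
    using basis unfolding def_basis_def by blast+
  have B_sub: "B t \<subseteq> carrier G" if "t \<in> TB" for t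
    using openin_subset[OF B(2)[OF that]] by simp
  have "def_family D mB k TB (\<lambda>t. \<pi> ` B t)"
    using B_sub by (intro def_family_image[OF B(1) def_map_quotient carrier_definable]) blast
  moreover have "openin ?QT (\<pi> ` B t)" if "t \<in> TB" for t
  proof -
    have "{x \<in> topspace \<tau>. \<pi> x \<in> \<pi> ` B t} = H <#> B t"
      using quotient_vimage_image[OF B_sub[OF that]] by simp
    then show ?thesis
      using openin_set_mult[OF H_subset B(2)[OF that]] B_sub[OF that] quotient_surjective
      by (auto simp: openin_quotient_topology)
  qed
  moreover have "\<exists>t\<in>TB. y \<in> \<pi> ` B t \<and> \<pi> ` B t \<subseteq> U" if "openin ?QT U" and y: "y \<in> U" for U y
  proof -
    have U: "U \<subseteq> topspace \<tau>Q" "openin \<tau> {x \<in> topspace \<tau>. \<pi> x \<in> U}"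
      using that(1) by (simp_all add: openin_quotient_topology)
    have "y \<in> \<pi> ` carrier G"
      using U(1) y quotient_surjective by auto
    then obtain g where g: "g \<in> carrier G" "\<pi> g = y"
      by blast
    then obtain t where "t \<in> TB" "g \<in> B t" "B t \<subseteq> {x \<in> topspace \<tau>. \<pi> x \<in> U}"
      using base[OF U(2)] y by auto
    with g show ?thesis
      by blast
  qed
  ultimately have "def_basis D mB k ?QT TB (\<lambda>t. \<pi> ` B t)"
    unfolding def_basis_def by blast
  moreover have "topspace ?QT = topspace \<tau>Q"
    using quotient_surjective by (simp add: topspace_quotient_topology)
  ultimately show ?thesis
    using Q_definable unfolding def_top_space_iff_basis by auto
qed

text \<open>The factorisation of \<open>\<pi>\<close> through the quotient topology is the identity on the surjective
image, so \<open>\<tau>Q\<close> is at least as fine as the quotient topology.\<close>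

lemma quotient_map_quotient: "quotient_map \<tau> \<tau>Q \<pi>"
proof -
  let ?QT = "quotient_topology \<tau> \<pi> (topspace \<tau>Q)"
  have "def_cont_map D n k \<tau> ?QT \<pi>"
    unfolding def_cont_map_def using quotient_surjective def_map_quotient
    by (simp add: continuous_map_quotient_topology)
  then obtain \<psi> where \<psi>: "def_cont_map D k k \<tau>Q ?QT \<psi>" "\<forall>g\<in>carrier G. \<pi> g = \<psi> (\<pi> g)"
    using quotient_factor[OF def_top_space_quotient_topology] quotient_mult by blast
  have \<psi>_id: "\<psi> y = y" if "y \<in> topspace \<tau>Q" for y
    using \<psi>(2) that quotient_surjective by force
  show ?thesis
    unfolding quotient_map_def
  proof (intro conjI allI impI)
    show "\<pi> ` topspace \<tau> = topspace \<tau>Q"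
      using quotient_surjective by simp
    fix U
    assume U: "U \<subseteq> topspace \<tau>Q"
    show "openin \<tau> {x \<in> topspace \<tau>. \<pi> x \<in> U} = openin \<tau>Q U"
    proof
      assume "openin \<tau> {x \<in> topspace \<tau>. \<pi> x \<in> U}"
      then have "openin ?QT U"
        using U by (simp add: openin_quotient_topology)
      then have "openin \<tau>Q {y \<in> topspace \<tau>Q. \<psi> y \<in> U}"
        using \<psi>(1) unfolding def_cont_map_def by (blast intro: openin_continuous_map_preimage)
      moreover have "{y \<in> topspace \<tau>Q. \<psi> y \<in> U} = U"
        using \<psi>_id U by auto
      ultimately show "openin \<tau>Q U"
        by simp
    qed (rule openin_continuous_map_preimage[OF continuous_map_quotient])
  qed
qed

lemma closedin_quotient_image:
  assumes "S \<subseteq> carrier G" "closedin \<tau> (H <#> S)"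
  shows "closedin \<tau>Q (\<pi> ` S)"
proof -
  have "\<pi> ` S \<subseteq> topspace \<tau>Q"
    using assms(1) quotient_surjective by blast
  moreover have "closedin \<tau> {x \<in> topspace \<tau>. \<pi> x \<in> \<pi> ` S}"
    using quotient_vimage_image[OF assms(1)] assms(2) by simp
  ultimately show ?thesis
    using quotient_map_quotient unfolding quotient_map_closedin by blast
qed

subsection \<open>Definable compactness\<close>

definition translators :: "'a list set \<Rightarrow> 'a list set \<Rightarrow> 'a list set" where
  "translators C U = {h \<in> H. \<exists>c\<in>C. h \<otimes> c \<in> U}"

lemma def_family_closure_translators:
  assumes F: "def_family D m n T F" and C: "C \<in> D n" "C \<subseteq> carrier G"
  shows "def_family D m n T (\<lambda>t. subtopology \<tau> H closure_of translators C (F t))"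
proof -
  obtain mB TB B where basis: "def_basis D mB n \<tau> TB B"
    by (rule obtain_def_basis)
  have "def_family D m n T (\<lambda>t. \<tau> closure_of translators C (F t))"
    unfolding translators_def using def_family_mult_preimage[OF F H_definable H_subset C] carrier_definable
    by (intro def_family_closure_of[OF basis]) simp_all
  then have "def_family D m n T (\<lambda>t. H \<inter> \<tau> closure_of translators C (F t))"
    using H_definable by (rule def_family_Int)
  moreover have "H \<inter> translators C U = translators C U" for U
    unfolding translators_def by blast
  ultimately show ?thesis
    by (simp add: closure_of_subtopology)
qed

lemma closure_translators_nonempty:
  assumes x: "x \<in> \<tau> closure_of (H <#> C)" and U: "openin \<tau> U" "x \<in> U"
  shows "subtopology \<tau> H closure_of translators C U \<noteq> {}"
proof -
  obtain y where "y \<in> H <#> C" "y \<in> U"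
    using x U unfolding in_closure_of by blast
  then obtain h c where "h \<in> H" "c \<in> C" "h \<otimes> c \<in> U"
    unfolding set_mult_def by blast
  then have "h \<in> translators C U"
    unfolding translators_def by blast
  moreover have "translators C U \<subseteq> topspace (subtopology \<tau> H)"
    using H_subset unfolding translators_def by auto
  ultimately show ?thesis
    using closure_of_subset by blast
qed

lemma inv_mult_mem_of_closure_translators:
  assumes C: "closedin \<tau> C" and x: "x \<in> carrier G" and h0: "h0 \<in> carrier G"
    and closure: "\<And>U. openin \<tau> U \<Longrightarrow> x \<in> U \<Longrightarrow> h0 \<in> \<tau> closure_of translators C U"
  shows "inv h0 \<otimes> x \<in> C"
proof (rule ccontr)
  assume notC: "inv h0 \<otimes> x \<notin> C"
  define P where "P = {p \<in> topspace (prod_topology \<tau> \<tau>). (\<lambda>(h, z). inv h \<otimes> z) p \<in> topspace \<tau> - C}"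
  have "openin (prod_topology \<tau> \<tau>) P"
    unfolding P_def using C
    by (intro openin_continuous_map_preimage[OF continuous_map_inv_mult]) (simp add: closedin_def)
  moreover have "(h0, x) \<in> P"
    unfolding P_def using h0 x notC by simp
  ultimately obtain N V where NV: "openin \<tau> N" "openin \<tau> V" "h0 \<in> N" "x \<in> V" "N \<times> V \<subseteq> P"
    by (metis openin_prod_topology_alt)
  obtain h c where hc: "h \<in> N" "h \<in> H" "c \<in> C" "h \<otimes> c \<in> V"
    using closure[OF NV(2,4)] NV(1,3) unfolding in_closure_of translators_def by blast
  have "h \<in> carrier G" "c \<in> carrier G"
    using hc closedin_subset[OF C] H_subset by auto
  then have "inv h \<otimes> (h \<otimes> c) = c"
    by (simp add: m_assoc[symmetric])
  moreover have "(h, h \<otimes> c) \<in> P"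
    using hc NV(5) by blast
  ultimately show False
    using hc(3) unfolding P_def by simp
qed

lemma common_translator:
  assumes H_compact: "def_compact D n (subtopology \<tau> H)" and C: "C \<in> D n" "C \<subseteq> carrier G"
    and x: "x \<in> \<tau> closure_of (H <#> C)"
  shows "\<exists>h0\<in>H. \<forall>U. openin \<tau> U \<and> x \<in> U \<longrightarrow> h0 \<in> \<tau> closure_of translators C U"
proof -
  have xG: "x \<in> carrier G"
    using closure_of_subset_topspace x by fastforce
  obtain mB TB B where basis: "def_basis D mB n \<tau> TB B"
    by (rule obtain_def_basis)
  have B_open: "\<And>s. s \<in> TB \<Longrightarrow> openin \<tau> (B s)"
    and base: "\<And>U y. openin \<tau> U \<Longrightarrow> y \<in> U \<Longrightarrow> \<exists>s\<in>TB. y \<in> B s \<and> B s \<subseteq> U"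
    using basis unfolding def_basis_def by blast+
  define Sx where "Sx = {s \<in> TB. x \<in> B s}"
  define K where "K s = subtopology \<tau> H closure_of translators C (B s)" for s
  have fam: "def_family D mB n Sx K"
    unfolding K_def Sx_def using def_family_basis_at[OF basis length_carrier[OF xG]]
    by (rule def_family_closure_translators[OF _ C])
  have nonempty: "Sx \<noteq> {}"
    using base[OF openin_topspace, of x] xG by (auto simp: Sx_def)
  have K_nonempty: "K s \<noteq> {}" if "s \<in> Sx" for s
    using closure_translators_nonempty[OF x B_open] that unfolding K_def Sx_def by blast
  have "filtered_family Sx K"
    unfolding Sx_def using filtered_family_basis_at[OF basis]
    by (rule filtered_family_mono) (auto simp: K_def translators_def intro!: closure_of_mono)
  moreover have "closedin (subtopology \<tau> H) (K s)" for s
    unfolding K_def by simp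
  ultimately have "(\<Inter>s\<in>Sx. K s) \<noteq> {}"
    using def_compactD[OF H_compact fam nonempty _ K_nonempty] by blast
  then obtain h0 where h0: "\<And>s. s \<in> Sx \<Longrightarrow> h0 \<in> K s"
    by blast
  show ?thesis
  proof (rule bexI[of _ h0])
    show "h0 \<in> H"
      using h0 nonempty closure_of_subset_topspace unfolding K_def by fastforce
    show "\<forall>U. openin \<tau> U \<and> x \<in> U \<longrightarrow> h0 \<in> \<tau> closure_of translators C U"
    proof (intro allI impI)
      fix U
      assume "openin \<tau> U \<and> x \<in> U"
      then obtain s where s: "s \<in> Sx" "B s \<subseteq> U"
        using base unfolding Sx_def by blast
      have "K s \<subseteq> \<tau> closure_of translators C (B s)"
        unfolding K_def closure_of_subtopology by (intro Int_lower2[THEN order_trans] closure_of_mono) blast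
      also have "\<dots> \<subseteq> \<tau> closure_of translators C U"
        using s(2) unfolding translators_def by (intro closure_of_mono) blast
      finally show "h0 \<in> \<tau> closure_of translators C U"
        using h0[OF s(1)] by blast
    qed
  qed
qed

lemma closedin_set_mult:
  assumes H_compact: "def_compact D n (subtopology \<tau> H)" and C: "closedin \<tau> C" "C \<in> D n"
  shows "closedin \<tau> (H <#> C)"
proof -
  have CG: "C \<subseteq> carrier G"
    using closedin_subset[OF C(1)] by simp
  have "x \<in> H <#> C" if x: "x \<in> \<tau> closure_of (H <#> C)" for x
  proof -
    have xG: "x \<in> carrier G"
      using closure_of_subset_topspace x by fastforce
    obtain h0 where h0: "h0 \<in> H"
      and "\<forall>U. openin \<tau> U \<and> x \<in> U \<longrightarrow> h0 \<in> \<tau> closure_of translators C U"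
      using common_translator[OF H_compact C(2) CG x] by blast
    then have "inv h0 \<otimes> x \<in> C"
      using H_subset by (intro inv_mult_mem_of_closure_translators[OF C(1) xG]) auto
    moreover have "x = h0 \<otimes> (inv h0 \<otimes> x)"
      using h0 H_subset xG by (auto simp: m_assoc[symmetric])
    ultimately show ?thesis
      using h0 unfolding set_mult_def by blast
  qed
  moreover have "H <#> C \<subseteq> topspace \<tau>"
    using set_mult_closed H_subset CG by simp
  ultimately show ?thesis
    using closure_of_subset_eq by blast
qed

lemma Inter_nonempty_of_common_quotient_point:
  assumes H_compact: "def_compact D n (subtopology \<tau> H)" and fam: "def_family D m n T C"
    and closed: "\<And>t. t \<in> T \<Longrightarrow> closedin \<tau> (C t)" and filtered: "filtered_family T C"
    and q: "\<And>t. t \<in> T \<Longrightarrow> q \<in> \<pi> ` C t" and t0: "t0 \<in> T"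
  shows "(\<Inter>t\<in>T. C t) \<noteq> {}"
proof -
  have CG: "C t \<subseteq> carrier G" if "t \<in> T" for t
    using closedin_subset[OF closed[OF that]] by simp
  obtain a where a: "a \<in> C t0" "q = \<pi> a"
    using q[OF t0] by blast
  have aG: "a \<in> carrier G"
    using a CG t0 by blast
  define K where "K = (\<lambda>t. {h \<in> H. h \<otimes> a \<in> C t})"
  have "def_family D m n T (\<lambda>t. {h \<in> H. \<exists>c\<in>{a}. h \<otimes> c \<in> C t})"
    using singleton_list_definable[of a] length_carrier[OF aG] aG
    by (intro def_family_mult_preimage[OF fam H_definable H_subset]) simp_all
  then have K_fam: "def_family D m n T K"
    by (simp add: K_def)
  have K_closed: "closedin (subtopology \<tau> H) (K t)" if "t \<in> T" for t
  proof -
    have "closedin \<tau> {x \<in> topspace \<tau>. x \<otimes> a \<in> C t}"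
      using closedin_continuous_map_preimage[OF continuous_map_right_mult[OF aG] closed[OF that]] .
    moreover have "K t = {x \<in> topspace \<tau>. x \<otimes> a \<in> C t} \<inter> H"
      using H_subset by (auto simp: K_def)
    ultimately show ?thesis
      unfolding closedin_subtopology by blast
  qed
  have K_nonempty: "K t \<noteq> {}" if t: "t \<in> T" for t
  proof -
    obtain c where c: "c \<in> C t" "\<pi> c = \<pi> a"
      using q[OF t] a(2) by auto
    then have "c \<in> H #> a"
      using quotient_eq_imp_r_coset[OF aG] CG[OF t] by blast
    then obtain h where "h \<in> H" "c = h \<otimes> a"
      unfolding r_coset_def by blast
    with c(1) show ?thesis
      by (auto simp: K_def)
  qed
  have "filtered_family T K"
    using filtered by (rule filtered_family_mono) (auto simp: K_def)
  then have "(\<Inter>t\<in>T. K t) \<noteq> {}"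
    using def_compactD[OF H_compact K_fam _ K_closed K_nonempty] t0 by blast
  then show ?thesis
    by (auto simp: K_def)
qed

lemma def_compact_extension:
  assumes H_compact: "def_compact D n (subtopology \<tau> H)" and Q_compact: "def_compact D k \<tau>Q"
  shows "def_compact D n \<tau>"
proof (rule def_compactI)
  fix m T C
  assume fam: "def_family D m n T C" and nonempty: "T \<noteq> {}"
    and closed: "\<And>t. t \<in> T \<Longrightarrow> closedin \<tau> (C t)" and C_nonempty: "\<And>t. t \<in> T \<Longrightarrow> C t \<noteq> {}"
    and filtered: "filtered_family T C"
  have CG: "C t \<subseteq> carrier G" if "t \<in> T" for t
    using closedin_subset[OF closed[OF that]] by simp
  have "def_family D m k T (\<lambda>t. \<pi> ` C t)"
    using CG by (intro def_family_image[OF fam def_map_quotient carrier_definable]) blast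
  moreover have "closedin \<tau>Q (\<pi> ` C t)" if "t \<in> T" for t
    using closedin_quotient_image[OF CG[OF that]
        closedin_set_mult[OF H_compact closed[OF that] def_family_fibre[OF fam that]]] .
  moreover have "filtered_family T (\<lambda>t. \<pi> ` C t)"
    using filtered by (rule filtered_family_mono) (rule image_mono)
  ultimately have "(\<Inter>t\<in>T. \<pi> ` C t) \<noteq> {}"
    using def_compactD[OF Q_compact _ nonempty] C_nonempty by blast
  then obtain q where "\<And>t. t \<in> T \<Longrightarrow> q \<in> \<pi> ` C t"
    by blast
  with nonempty show "(\<Inter>t\<in>T. C t) \<noteq> {}"
    using Inter_nonempty_of_common_quotient_point[OF H_compact fam closed filtered] by blast
qed

end

theorem theorem5p7:
  fixes D :: "nat \<Rightarrow> ('a::linordered_ab_group_add) list set set"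
    and G :: "'a list monoid" and \<tau> :: "'a list topology" and H :: "'a list set"
    and \<tau>Q :: "'a list topology" and \<pi> :: "'a list \<Rightarrow> 'a list"
  assumes "dc_lomin_expansion D"
    and "def_top_group D n G \<tau>"
    and "normal H G" and "H \<in> D n"
    and "is_def_quotient D n G \<tau> H k \<tau>Q \<pi>"
    and "def_compact D n (subtopology \<tau> H)"
    and "def_compact D k \<tau>Q"
  shows "def_compact D n \<tau>"
proof -
  have "definable_structure D"
    using assms(1) unfolding dc_lomin_expansion_def expands_ordered_group_def definable_structure_def
    by blast
  moreover have "\<exists>a b :: 'a. a \<noteq> b"
    using assms(1) unfolding dc_lomin_expansion_def by (metis less_irrefl)
  ultimately interpret definable_quotient D n G \<tau> H k \<tau>Q \<pi>
    using assms(2-5) normal_imp_subgroup[OF assms(3)]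
    unfolding definable_quotient_def definable_quotient_axioms_def by blast
  show ?thesis
    using assms(6,7) by (rule def_compact_extension)
qed

end
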